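(* Let $k\ge 1$ and $\ell$ be integers with $0\le \ell\le k$. Let $G$ be a multigraph (loops allowed) with $n$ vertices and $kn-\ell$ edges. The following statements are equivalent: (1) $G$ is the union of $\ell$ edge-disjoint spanning trees and $k-\ell$ edge-disjoint maps; (2) adding any $\ell$ edges to $G$ results in a $k$-map.
   Context: Graphs are multigraphs, possibly with loops. A map is a graph admitting an orientation of its edges such that every vertex has out-degree exactly $1$ (a loop contributes out-degree $1$ to its vertex); maps here are spanning, i.e. on the full vertex set of $G$. A $k$-map is a graph whose edge set can be partitioned into $k$ edge-disjoint maps on the same vertex set. *)

theory Defs
  imports Main
begin

text \<open>A multigraph (loops allowed) is given by a vertex set V, an edge set E of
edge names, and an endpoint function ep assigning to each edge its (unordered;
the order of the pair is irrelevant below) pair of endpoints.\<close>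

definition multigraph :: "'v set \<Rightarrow> 'e set \<Rightarrow> ('e \<Rightarrow> 'v \<times> 'v) \<Rightarrow> bool" where
  "multigraph V E ep \<longleftrightarrow> finite V \<and> finite E \<and>
     (\<forall>e\<in>E. fst (ep e) \<in> V \<and> snd (ep e) \<in> V)"

definition is_map :: "'v set \<Rightarrow> 'e set \<Rightarrow> ('e \<Rightarrow> 'v \<times> 'v) \<Rightarrow> bool" where
  "is_map V F ep \<longleftrightarrow>
     (\<exists>t. (\<forall>e\<in>F. t e = fst (ep e) \<or> t e = snd (ep e)) \<and>
          (\<forall>v\<in>V. card {e\<in>F. t e = v} = 1))"

definition is_kmap :: "nat \<Rightarrow> 'v set \<Rightarrow> 'e set \<Rightarrow> ('e \<Rightarrow> 'v \<times> 'v) \<Rightarrow> bool" where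
  "is_kmap k V F ep \<longleftrightarrow>
     (\<exists>c::'e \<Rightarrow> nat. (\<forall>e\<in>F. c e < k) \<and> (\<forall>i<k. is_map V {e\<in>F. c e = i} ep))"

definition walk :: "'e set \<Rightarrow> ('e \<Rightarrow> 'v \<times> 'v) \<Rightarrow> 'v list \<Rightarrow> 'e list \<Rightarrow> bool" where
  "walk T ep vs es \<longleftrightarrow> length vs = Suc (length es) \<and>
     (\<forall>i<length es. es ! i \<in> T \<and>
        (ep (es ! i) = (vs ! i, vs ! Suc i) \<or> ep (es ! i) = (vs ! Suc i, vs ! i)))"

definition connected_on :: "'v set \<Rightarrow> 'e set \<Rightarrow> ('e \<Rightarrow> 'v \<times> 'v) \<Rightarrow> bool" where
  "connected_on V T ep \<longleftrightarrow>
     (\<forall>u\<in>V. \<forall>v\<in>V. \<exists>vs es. walk T ep vs es \<and> hd vs = u \<and> last vs = v)"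

text \<open>Acyclic: no closed trail (closed walk of positive length with distinct
edges); in a multigraph loops and parallel edges are cycles.\<close>

definition acyclic_edges :: "'e set \<Rightarrow> ('e \<Rightarrow> 'v \<times> 'v) \<Rightarrow> bool" where
  "acyclic_edges T ep \<longleftrightarrow>
     \<not> (\<exists>vs es. walk T ep vs es \<and> es \<noteq> [] \<and> distinct es \<and> hd vs = last vs)"

definition spanning_tree :: "'v set \<Rightarrow> 'e set \<Rightarrow> ('e \<Rightarrow> 'v \<times> 'v) \<Rightarrow> bool" where
  "spanning_tree V T ep \<longleftrightarrow> connected_on V T ep \<and> acyclic_edges T ep"

definition trees_and_maps :: "nat \<Rightarrow> nat \<Rightarrow> 'v set \<Rightarrow> 'e set \<Rightarrow> ('e \<Rightarrow> 'v \<times> 'v) \<Rightarrow> bool" where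
  "trees_and_maps l k V E ep \<longleftrightarrow>
     (\<exists>c::'e \<Rightarrow> nat. (\<forall>e\<in>E. c e < k) \<and>
        (\<forall>i<l. spanning_tree V {e\<in>E. c e = i} ep) \<and>
        (\<forall>i. l \<le> i \<and> i < k \<longrightarrow> is_map V {e\<in>E. c e = i} ep))"

text \<open>Adding l new edges with endpoints f 0, ..., f (l-1) (loops allowed).\<close>

definition add_edges :: "'e set \<Rightarrow> nat \<Rightarrow> ('e + nat) set" where
  "add_edges E l = Inl ` E \<union> Inr ` {..<l}"

end

theory Submission
  imports Defs
begin

text \<open>(1) \<Longrightarrow> (2): a connected spanning subgraph has at least n - 1 edges and a map exactly n, so
  the edge count kn - l forces each of the l trees to have exactly n - 1 edges. Orienting a tree
  towards an endpoint of one of the added edges, and that edge away from it, then turns tree plus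
  edge into a map.

  (2) \<Longrightarrow> (1): adding l loops at a vertex x yields an orientation of G with out-degree k everywhere
  except k - l at x. With x a fixed root this is the orientation used; with x ranging over a set X
  it shows that X induces at most k |X| - l edges. Hence every nonempty set of non-root vertices
  is left by at least l arcs, and Edmonds' arborescence packing theorem gives l arc-disjoint
  in-arborescences, which are spanning trees. The remaining arcs have out-degree k - l at every
  vertex and so split into k - l maps.\<close>

lemma walk_Cons:
  "walk T ep (v # vs) (e # es) \<longleftrightarrow>
   e \<in> T \<and> (ep e = (v, hd vs) \<or> ep e = (hd vs, v)) \<and> vs \<noteq> [] \<and> walk T ep vs es"
proof
  assume w: "walk T ep (v # vs) (e # es)"
  hence ne: "vs \<noteq> []" by (auto simp: walk_def)
  with w show "e \<in> T \<and> (ep e = (v, hd vs) \<or> ep e = (hd vs, v)) \<and> vs \<noteq> [] \<and> walk T ep vs es"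
    unfolding walk_def by (auto simp: hd_conv_nth)
next
  assume "e \<in> T \<and> (ep e = (v, hd vs) \<or> ep e = (hd vs, v)) \<and> vs \<noteq> [] \<and> walk T ep vs es"
  thus "walk T ep (v # vs) (e # es)"
    unfolding walk_def by (auto simp: hd_conv_nth nth_Cons split: nat.split)
qed

lemma walk_nonempty: "walk T ep vs es \<Longrightarrow> vs \<noteq> []"
  by (auto simp: walk_def)

lemma walk_append:
  assumes "walk T ep vs1 es1" "walk T ep vs2 es2" "last vs1 = hd vs2"
  shows "walk T ep (vs1 @ tl vs2) (es1 @ es2) \<and> hd (vs1 @ tl vs2) = hd vs1 \<and>
    last (vs1 @ tl vs2) = last vs2"
  using assms
proof (induction es1 arbitrary: vs1)
  case Nil
  then obtain u where "vs1 = [u]" by (auto simp: walk_def length_Suc_conv)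
  with Nil walk_nonempty[OF Nil.prems(2)] show ?case by (cases vs2) auto
next
  case (Cons e es1)
  then obtain v vs where "vs1 = v # vs" by (cases vs1) (auto simp: walk_def)
  with Cons show ?case by (auto simp: walk_Cons walk_nonempty)
qed

lemma walk_rev: "walk T ep vs es \<Longrightarrow> walk T ep (rev vs) (rev es)"
proof (induction es arbitrary: vs)
  case Nil thus ?case by (simp add: walk_def)
next
  case (Cons e es)
  then obtain v vs' where vs: "vs = v # vs'" by (cases vs) (auto simp: walk_def)
  with Cons.prems have e: "e \<in> T" "ep e = (v, hd vs') \<or> ep e = (hd vs', v)" "vs' \<noteq> []"
    and w: "walk T ep vs' es" by (auto simp: walk_Cons)
  have "walk T ep [hd vs', v] [e]" using e by (auto simp: walk_Cons walk_def)
  from walk_append[OF Cons.IH[OF w] this] e(3) show ?case by (simp add: vs last_rev)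
qed

definition reachable :: "'e set \<Rightarrow> ('e \<Rightarrow> 'v \<times> 'v) \<Rightarrow> 'v \<Rightarrow> 'v \<Rightarrow> bool" where
  "reachable T ep u v \<longleftrightarrow> (\<exists>vs es. walk T ep vs es \<and> hd vs = u \<and> last vs = v)"

lemma connected_on_iff_reachable:
  "connected_on V T ep \<longleftrightarrow> (\<forall>u\<in>V. \<forall>v\<in>V. reachable T ep u v)"
  by (simp add: connected_on_def reachable_def)

lemma reachable_refl: "reachable T ep u u"
  unfolding reachable_def by (rule exI[of _ "[u]"], rule exI[of _ "[]"]) (simp add: walk_def)

lemma reachable_sym: "reachable T ep u v \<Longrightarrow> reachable T ep v u"
  unfolding reachable_def by (metis walk_rev hd_rev last_rev)

lemma reachable_trans: "reachable T ep u v \<Longrightarrow> reachable T ep v w \<Longrightarrow> reachable T ep u w"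
  unfolding reachable_def by (metis walk_append)

lemma reachable_Cons:
  assumes "e \<in> T" "ep e = (u, w) \<or> ep e = (w, u)" "reachable T ep w v"
  shows "reachable T ep u v"
proof -
  obtain vs es where "walk T ep vs es" "hd vs = w" "last vs = v"
    using assms(3) unfolding reachable_def by blast
  hence "walk T ep (u # vs) (e # es) \<and> hd (u # vs) = u \<and> last (u # vs) = v"
    using assms(1,2) walk_nonempty by (fastforce simp: walk_Cons)
  thus ?thesis unfolding reachable_def by blast
qed

section \<open>Orientations and in-arborescences\<close>

abbreviation orientation :: "('e \<Rightarrow> 'v \<times> 'v) \<Rightarrow> 'e set \<Rightarrow> ('e \<Rightarrow> 'v) \<Rightarrow> bool" where
  "orientation ep F t \<equiv> \<forall>e\<in>F. t e = fst (ep e) \<or> t e = snd (ep e)"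

abbreviation outdeg :: "'e set \<Rightarrow> ('e \<Rightarrow> 'v) \<Rightarrow> 'v \<Rightarrow> nat" where
  "outdeg F t v \<equiv> card {e\<in>F. t e = v}"

definition head_of :: "('e \<Rightarrow> 'v \<times> 'v) \<Rightarrow> ('e \<Rightarrow> 'v) \<Rightarrow> 'e \<Rightarrow> 'v" where
  "head_of ep t e = (if t e = fst (ep e) then snd (ep e) else fst (ep e))"

lemma endpoints_tail_head:
  "t e = fst (ep e) \<or> t e = snd (ep e) \<Longrightarrow>
   ep e = (t e, head_of ep t e) \<or> ep e = (head_of ep t e, t e)"
  by (cases "ep e") (auto simp: head_of_def)

text \<open>Arcs run from t e to h e; the potential d, decreasing along arcs, excludes directed cycles.\<close>

definition in_arborescence :: "'v set \<Rightarrow> 'v \<Rightarrow> ('e \<Rightarrow> 'v) \<Rightarrow> ('e \<Rightarrow> 'v) \<Rightarrow> 'e set \<Rightarrow> bool" where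
  "in_arborescence R r t h F \<longleftrightarrow>
     (\<exists>d::'v \<Rightarrow> nat. \<forall>e\<in>F. t e \<in> R - {r} \<and> h e \<in> R \<and> d (h e) < d (t e)) \<and>
     (\<forall>v\<in>R - {r}. outdeg F t v = 1)"

lemma in_arborescence_reachable_root:
  assumes arb: "in_arborescence V r t (head_of ep t) A" and t: "orientation ep A t" and "u \<in> V"
  shows "reachable A ep u r"
proof -
  obtain d :: "_ \<Rightarrow> nat" where
    d: "\<forall>e\<in>A. t e \<in> V - {r} \<and> head_of ep t e \<in> V \<and> d (head_of ep t e) < d (t e)"
    and out: "\<forall>v\<in>V - {r}. outdeg A t v = 1"
    using arb unfolding in_arborescence_def by blast
  show ?thesis
    using \<open>u \<in> V\<close>
  proof (induction "d u" arbitrary: u rule: less_induct)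
    case less
    show ?case
    proof (cases "u = r")
      case True thus ?thesis by (simp add: reachable_refl)
    next
      case False
      with less.prems out have "outdeg A t u = 1" by auto
      then obtain e where "{e\<in>A. t e = u} = {e}" by (rule card_1_singletonE)
      hence e: "e \<in> A" "t e = u" by auto
      with d less.hyps have "reachable A ep (head_of ep t e) r" by auto
      moreover have "ep e = (u, head_of ep t e) \<or> ep e = (head_of ep t e, u)"
        using endpoints_tail_head[of t e ep] t e by auto
      ultimately show ?thesis using reachable_Cons e(1) by metis
    qed
  qed
qed

lemma descending_edge_tail:
  fixes d :: "'v \<Rightarrow> nat"
  assumes "t e = fst (ep e) \<or> t e = snd (ep e)" "d (head_of ep t e) < d (t e)"
    and "ep e = (v, w) \<or> ep e = (w, v)" "d w \<le> d v"
  shows "t e = v"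
  using assms by (cases "ep e") (auto simp: head_of_def split: if_splits)

text \<open>On a closed trail, the vertex of largest potential would be the tail of both trail edges
  at it; for a loop this contradicts the strict descent, otherwise the out-degree bound.\<close>

lemma in_arborescence_acyclic:
  assumes arb: "in_arborescence V r t (head_of ep t) A" and t: "orientation ep A t"
  shows "acyclic_edges A ep"
  unfolding acyclic_edges_def
proof
  assume "\<exists>vs es. walk A ep vs es \<and> es \<noteq> [] \<and> distinct es \<and> hd vs = last vs"
  then obtain vs es where w: "walk A ep vs es" and "es \<noteq> []" and dis: "distinct es"
    and closed: "hd vs = last vs" by blast
  obtain d :: "_ \<Rightarrow> nat" where
    d: "\<forall>e\<in>A. t e \<in> V - {r} \<and> head_of ep t e \<in> V \<and> d (head_of ep t e) < d (t e)"
    and out: "\<forall>v\<in>V - {r}. outdeg A t v = 1"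
    using arb unfolding in_arborescence_def by blast
  define m where "m = length es"
  have m: "m \<ge> 1" using \<open>es \<noteq> []\<close> by (simp add: m_def Suc_leI)
  have len: "length vs = Suc m" using w by (simp add: walk_def m_def)
  have wrap: "vs ! m = vs ! 0"
    using closed len by (simp add: hd_conv_nth last_conv_nth flip: length_greater_0_conv)
  have edge: "es ! j \<in> A \<and> (ep (es ! j) = (vs ! j, vs ! Suc j) \<or> ep (es ! j) = (vs ! Suc j, vs ! j))"
    if "j < m" for j
    using w that by (simp add: walk_def m_def)
  obtain i where i: "i < m" and imax: "\<forall>j<m. d (vs ! j) \<le> d (vs ! i)"
    using ex_has_greatest_nat[of "\<lambda>j. j < m" 0 "\<lambda>j. d (vs ! j)"
        "Suc (Max ((\<lambda>j. d (vs ! j)) ` {..<m}))"] m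
    by (auto simp: le_imp_less_Suc)
  have le: "d (vs ! j) \<le> d (vs ! i)" if "j \<le> m" for j
    using imax that wrap m by (cases "j = m") auto
  define v where "v = vs ! i"
  have tail_v: "t e = v"
    if "j < m" "e = es ! j" "ep e = (v, w) \<or> ep e = (w, v)" "w = vs ! j \<or> w = vs ! Suc j" for e j w
    using descending_edge_tail[of t e ep d v w] edge[of j] t d that le[of j] le[of "Suc j"] v_def
    by auto
  define j where "j = (if i = 0 then m - 1 else i - 1)"
  have j: "j < m" "vs ! Suc j = v" using i m wrap by (auto simp: j_def v_def)
  have ti: "t (es ! i) = v" using tail_v[OF i refl] edge[OF i] by (auto simp: v_def)
  have tj: "t (es ! j) = v" using tail_v[OF j(1) refl] edge[OF j(1)] j(2) by auto
  show False
  proof (cases "m = 1")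
    case True
    hence "ep (es ! i) = (v, v)" using edge[OF i] i wrap by (simp add: v_def)
    with ti d edge[OF i] show False by (auto simp: head_of_def)
  next
    case False
    hence "es ! i \<noteq> es ! j" using dis i j by (auto simp: j_def m_def nth_eq_iff_index_eq)
    moreover have "v \<in> V - {r}" using d edge[OF i] ti by auto
    ultimately show False
      using out edge[OF i] edge[OF j(1)] ti tj
      by (metis (mono_tags, lifting) card_1_singletonE mem_Collect_eq singletonD)
  qed
qed

lemma in_arborescence_spanning_tree:
  assumes "in_arborescence V r t (head_of ep t) A" "orientation ep A t" "r \<in> V"
  shows "spanning_tree V A ep"
  unfolding spanning_tree_def connected_on_iff_reachable
  using assms in_arborescence_acyclic in_arborescence_reachable_root reachable_sym reachable_trans
  by metis

lemma in_arborescence_outdeg: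
  assumes "in_arborescence V r t h F" "v \<in> V"
  shows "outdeg F t v = (if v = r then 0 else 1)"
proof (cases "v = r")
  case True
  hence "{e\<in>F. t e = v} = {}" using assms(1) unfolding in_arborescence_def by auto
  hence "outdeg F t v = 0" by (metis card.empty)
  thus ?thesis using True by simp
next
  case False
  thus ?thesis using assms unfolding in_arborescence_def by auto
qed

section \<open>Edmonds' arborescence packing theorem\<close>

definition out_cut :: "'e set \<Rightarrow> ('e \<Rightarrow> 'v) \<Rightarrow> ('e \<Rightarrow> 'v) \<Rightarrow> 'v set \<Rightarrow> nat" where
  "out_cut D t h X = card {e\<in>D. t e \<in> X \<and> h e \<notin> X}"

definition cut_condition :: "'v set \<Rightarrow> 'v \<Rightarrow> ('e \<Rightarrow> 'v) \<Rightarrow> ('e \<Rightarrow> 'v) \<Rightarrow> 'e set \<Rightarrow> nat \<Rightarrow> bool" where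
  "cut_condition V r t h D l \<longleftrightarrow> (\<forall>X. X \<subseteq> V - {r} \<longrightarrow> X \<noteq> {} \<longrightarrow> l \<le> out_cut D t h X)"

lemma card_Collect_eq_sum:
  "finite S \<Longrightarrow> card {e\<in>S. P e} = (\<Sum>e\<in>S. if P e then 1 else 0)"
  by (simp add: sum.If_cases Int_def conj_commute)

lemma out_cut_submodular:
  assumes "finite D"
  shows "out_cut D t h (X \<inter> Z) + out_cut D t h (X \<union> Z) \<le> out_cut D t h X + out_cut D t h Z"
proof -
  have "out_cut D t h (X \<inter> Z) + out_cut D t h (X \<union> Z) =
    (\<Sum>e\<in>D. (if t e \<in> X \<inter> Z \<and> h e \<notin> X \<inter> Z then 1 else 0) +
            (if t e \<in> X \<union> Z \<and> h e \<notin> X \<union> Z then 1 else 0))"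
    using assms by (simp add: out_cut_def card_Collect_eq_sum sum.distrib)
  also have "\<dots> \<le> (\<Sum>e\<in>D. (if t e \<in> X \<and> h e \<notin> X then 1 else 0) +
                          (if t e \<in> Z \<and> h e \<notin> Z then 1 else 0))"
    by (rule sum_mono) auto
  also have "\<dots> = out_cut D t h X + out_cut D t h Z"
    using assms by (simp add: out_cut_def card_Collect_eq_sum sum.distrib)
  finally show ?thesis .
qed

lemma out_cut_mono:
  "finite D \<Longrightarrow> {e\<in>D. t e \<in> Y \<and> h e \<notin> Y} \<subseteq> {e\<in>D. t e \<in> X \<and> h e \<notin> X} \<Longrightarrow>
   out_cut D t h Y \<le> out_cut D t h X"
  unfolding out_cut_def by (rule card_mono) auto

lemma out_cut_Diff_outside:
  "\<forall>e\<in>F. t e \<notin> X \<Longrightarrow> out_cut (D - F) t h X = out_cut D t h X"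
  unfolding out_cut_def by (rule arg_cong[where f = card]) auto

lemma out_cut_Diff_insert:
  assumes "finite D" "e0 \<in> D - F"
  shows "out_cut (D - F) t h X =
    out_cut (D - insert e0 F) t h X + (if t e0 \<in> X \<and> h e0 \<notin> X then 1 else 0)"
proof -
  have "{e\<in>D - F. t e \<in> X \<and> h e \<notin> X} =
      {e\<in>D - insert e0 F. t e \<in> X \<and> h e \<notin> X} \<union> (if t e0 \<in> X \<and> h e0 \<notin> X then {e0} else {})"
    using assms(2) by auto
  thus ?thesis using assms(1) by (simp add: out_cut_def)
qed

lemma cut_condition_Suc: "cut_condition V r t h D (Suc l) \<Longrightarrow> cut_condition V r t h D l"
  unfolding cut_condition_def by (meson Suc_leD)

text \<open>The union X \<union> Z still meets the cut condition, so submodularity forces the intersection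
  down to l.\<close>

lemma tight_Int:
  assumes "finite D" "cut_condition V r t h D l"
    and "X \<subseteq> V - {r}" "out_cut D t h X \<le> l" "Z \<subseteq> V - {r}" "out_cut D t h Z \<le> l"
    and "X \<inter> Z \<noteq> {}"
  shows "out_cut D t h (X \<inter> Z) \<le> l"
proof -
  have "l \<le> out_cut D t h (X \<union> Z)"
    using assms unfolding cut_condition_def by (metis Un_empty Un_subset_iff inf_bot_right)
  with out_cut_submodular[OF assms(1), of t h X Z] assms(4,6) show ?thesis by linarith
qed

text \<open>A set is tight if D - F barely meets its cut condition. If no tight set reaches outside R,
  any arc from V - R into R will do. Otherwise take a smallest tight set X: some arc leaves
  X - R into X \<inter> R, and a tight set left by that arc would intersect X in a smaller tight set.\<close>

lemma safe_arc_exists: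
  assumes "finite V" "finite D" "r \<in> R" "R \<subseteq> V" "R \<noteq> V"
    and arcs: "\<forall>e\<in>D. t e \<in> V \<and> h e \<in> V" and tails_F: "\<forall>e\<in>F. t e \<in> R"
    and cut_D: "cut_condition V r t h D (Suc l)" and cut_DF: "cut_condition V r t h (D - F) l"
  shows "\<exists>e0\<in>D - F. t e0 \<notin> R \<and> h e0 \<in> R \<and>
     (\<forall>X. X \<subseteq> V - {r} \<longrightarrow> t e0 \<in> X \<longrightarrow> h e0 \<notin> X \<longrightarrow> l < out_cut (D - F) t h X)"
proof -
  have fin: "finite (D - F)" using \<open>finite D\<close> by simp
  have outside_R: "Suc l \<le> out_cut (D - F) t h Y" if "Y \<subseteq> V - {r}" "Y \<noteq> {}" "Y \<inter> R = {}" for Y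
  proof -
    have "\<forall>e\<in>F. t e \<notin> Y" using tails_F that(3) by auto
    hence "out_cut (D - F) t h Y = out_cut D t h Y" by (rule out_cut_Diff_outside)
    with cut_D that(1,2) show ?thesis unfolding cut_condition_def by simp
  qed
  define tight where "tight X \<longleftrightarrow> X \<subseteq> V - {r} \<and> out_cut (D - F) t h X \<le> l \<and> X - R \<noteq> {}" for X
  show ?thesis
  proof (cases "\<exists>X. tight X")
    case False
    have "V - R \<subseteq> V - {r}" "V - R \<noteq> {}" using assms(3-5) by auto
    moreover have "(V - R) \<inter> R = {}" by blast
    ultimately have "Suc l \<le> out_cut (D - F) t h (V - R)" by (rule outside_R)
    hence "{e\<in>D - F. t e \<in> V - R \<and> h e \<notin> V - R} \<noteq> {}"
      unfolding out_cut_def by (metis card.empty not_less_eq_eq zero_le)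
    then obtain e0 where e0: "e0 \<in> D - F" "t e0 \<in> V - R" "h e0 \<notin> V - R" by blast
    have "l < out_cut (D - F) t h X" if "X \<subseteq> V - {r}" "t e0 \<in> X" for X
    proof -
      have "X - R \<noteq> {}" using that e0(2) by blast
      with False that show ?thesis unfolding tight_def by (meson not_le)
    qed
    moreover have "h e0 \<in> R" using e0 arcs by auto
    ultimately show ?thesis using e0 by blast
  next
    case True
    then obtain X where X: "tight X" and X_min: "\<forall>Z. tight Z \<longrightarrow> card X \<le> card Z"
      using ex_has_least_nat[of tight _ card] by blast
    have "finite X" using X \<open>finite V\<close> unfolding tight_def by (meson finite_Diff finite_subset)
    have "Suc l \<le> out_cut (D - F) t h (X - R)"
      using X unfolding tight_def by (intro outside_R) auto
    with X have "\<not> out_cut (D - F) t h (X - R) \<le> out_cut (D - F) t h X"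
      unfolding tight_def by linarith
    then obtain e0 where e0: "e0 \<in> D - F" "t e0 \<in> X - R" "h e0 \<in> X \<inter> R"
      using out_cut_mono[OF fin, of t "X - R" h X] by blast
    have "l < out_cut (D - F) t h Z"
      if Z: "Z \<subseteq> V - {r}" "t e0 \<in> Z" "h e0 \<notin> Z" for Z
    proof (rule ccontr)
      assume "\<not> ?thesis"
      hence "out_cut (D - F) t h (X \<inter> Z) \<le> l"
        using tight_Int[OF fin cut_DF, of X Z] X Z e0 unfolding tight_def by auto
      hence "tight (X \<inter> Z)" using X Z e0 unfolding tight_def by auto
      moreover have "card (X \<inter> Z) < card X"
        using \<open>finite X\<close> e0 Z by (intro psubset_card_mono) auto
      ultimately show False using X_min by (meson leD)
    qed
    thus ?thesis using e0 by blast
  qed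
qed

lemma in_arborescence_insert:
  assumes arb: "in_arborescence R r t h F" and "e0 \<notin> F" "t e0 \<notin> R" "h e0 \<in> R" "r \<in> R"
  shows "in_arborescence (insert (t e0) R) r t h (insert e0 F)"
proof -
  obtain d :: "_ \<Rightarrow> nat" where d: "\<forall>e\<in>F. t e \<in> R - {r} \<and> h e \<in> R \<and> d (h e) < d (t e)"
    and out: "\<forall>v\<in>R - {r}. outdeg F t v = 1"
    using arb unfolding in_arborescence_def by blast
  let ?d = "d(t e0 := Suc (d (h e0)))"
  have "\<forall>e\<in>insert e0 F. t e \<in> insert (t e0) R - {r} \<and> h e \<in> insert (t e0) R \<and> ?d (h e) < ?d (t e)"
    using d assms(2-5) by auto
  moreover have "outdeg (insert e0 F) t v = 1" if "v \<in> insert (t e0) R - {r}" for v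
  proof (cases "v = t e0")
    case True
    hence "{e\<in>insert e0 F. t e = v} = {e0}" using d assms(3) by auto
    thus ?thesis by simp
  next
    case False
    hence "{e\<in>insert e0 F. t e = v} = {e\<in>F. t e = v}" by auto
    thus ?thesis using out that False by auto
  qed
  ultimately show ?thesis unfolding in_arborescence_def by blast
qed

lemma in_arborescence_grow:
  assumes "finite V" "finite D" "r \<in> V" and arcs: "\<forall>e\<in>D. t e \<in> V \<and> h e \<in> V"
    and cut_D: "cut_condition V r t h D (Suc l)"
  shows "R \<subseteq> V \<Longrightarrow> r \<in> R \<Longrightarrow> F \<subseteq> D \<Longrightarrow> in_arborescence R r t h F \<Longrightarrow>
    cut_condition V r t h (D - F) l \<Longrightarrow>
    \<exists>F'\<subseteq>D. in_arborescence V r t h F' \<and> cut_condition V r t h (D - F') l"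
proof (induction "card (V - R)" arbitrary: R F rule: less_induct)
  case less
  show ?case
  proof (cases "R = V")
    case True
    thus ?thesis using less.prems(3-5) by blast
  next
    case False
    have tails: "\<forall>e\<in>F. t e \<in> R" using less.prems(4) unfolding in_arborescence_def by blast
    obtain e0 where e0: "e0 \<in> D - F" "t e0 \<notin> R" "h e0 \<in> R"
      and safe: "\<forall>X. X \<subseteq> V - {r} \<longrightarrow> t e0 \<in> X \<longrightarrow> h e0 \<notin> X \<longrightarrow> l < out_cut (D - F) t h X"
      using safe_arc_exists[OF assms(1,2) less.prems(2,1) False arcs tails cut_D less.prems(5)] by blast
    have arb: "in_arborescence (insert (t e0) R) r t h (insert e0 F)"
      using e0(1) by (intro in_arborescence_insert[OF less.prems(4) _ e0(2,3) less.prems(2)]) blast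
    have "l \<le> out_cut (D - insert e0 F) t h X" if X: "X \<subseteq> V - {r}" "X \<noteq> {}" for X
    proof (cases "t e0 \<in> X \<and> h e0 \<notin> X")
      case True
      hence "l < out_cut (D - F) t h X" using safe X(1) by simp
      thus ?thesis using out_cut_Diff_insert[OF assms(2) e0(1), where X = X] True by simp
    next
      case False
      have "l \<le> out_cut (D - F) t h X" using X less.prems(5) unfolding cut_condition_def by simp
      thus ?thesis using out_cut_Diff_insert[OF assms(2) e0(1), where X = X] False by simp
    qed
    hence cut: "cut_condition V r t h (D - insert e0 F) l" unfolding cut_condition_def by blast
    have "t e0 \<in> V - R" using e0 arcs by auto
    hence "card (V - R - {t e0}) < card (V - R)"
      using \<open>finite V\<close> by (intro card_Diff1_less) auto
    moreover have "V - R - {t e0} = V - insert (t e0) R" by blast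
    ultimately have smaller: "card (V - insert (t e0) R) < card (V - R)" by simp
    have "insert (t e0) R \<subseteq> V" "r \<in> insert (t e0) R" "insert e0 F \<subseteq> D"
      using less.prems(1-3) e0 arcs by auto
    from less.hyps[OF smaller this arb cut] show ?thesis .
  qed
qed

text \<open>Edmonds' theorem, in the orientation where arcs point towards the root.\<close>

theorem arborescence_packing:
  assumes "finite V" "r \<in> V"
  shows "finite D \<Longrightarrow> \<forall>e\<in>D. t e \<in> V \<and> h e \<in> V \<Longrightarrow> cut_condition V r t h D l \<Longrightarrow>
    \<exists>c::'e \<Rightarrow> nat. \<forall>i<l. in_arborescence V r t h {e\<in>D. c e = i}"
proof (induction l arbitrary: D)
  case 0 thus ?case by simp
next
  case (Suc l)
  have "in_arborescence {r} r t h {}" unfolding in_arborescence_def by simp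
  moreover have "cut_condition V r t h (D - {}) l" using cut_condition_Suc Suc.prems(3) by simp
  ultimately have "\<exists>F\<subseteq>D. in_arborescence V r t h F \<and> cut_condition V r t h (D - F) l"
    using assms(2) by (intro in_arborescence_grow[OF assms(1) Suc.prems(1) assms(2) Suc.prems(2,3)]) auto
  then obtain F where F: "F \<subseteq> D" "in_arborescence V r t h F" "cut_condition V r t h (D - F) l"
    by blast
  moreover have "finite (D - F)" "\<forall>e\<in>D - F. t e \<in> V \<and> h e \<in> V" using Suc.prems by auto
  ultimately obtain c where c: "\<forall>i<l. in_arborescence V r t h {e\<in>D - F. c e = i}"
    using Suc.IH by blast
  define c' where "c' e = (if e \<in> F then 0 else Suc (c e))" for e
  have "{e\<in>D. c' e = 0} = F" "\<And>i. {e\<in>D. c' e = Suc i} = {e\<in>D - F. c e = i}"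
    using F(1) by (auto simp: c'_def)
  hence "\<forall>i<Suc l. in_arborescence V r t h {e\<in>D. c' e = i}"
    using F(2) c by (auto simp: less_Suc_eq_0_disj)
  thus ?case by blast
qed

lemma card_tails_in:
  "finite E \<Longrightarrow> finite X \<Longrightarrow> card {e\<in>E. t e \<in> X} = (\<Sum>v\<in>X. outdeg E t v)"
  by (subst card_UN_disjoint[symmetric]) (auto intro: arg_cong[where f = card])

lemma is_map_card:
  assumes "is_map V F ep" "finite F" "\<forall>e\<in>F. fst (ep e) \<in> V \<and> snd (ep e) \<in> V" "finite V"
  shows "card F = card V"
proof -
  obtain t where t: "orientation ep F t" "\<forall>v\<in>V. outdeg F t v = 1"
    using assms(1) unfolding is_map_def by blast
  have "F = {e\<in>F. t e \<in> V}" using t(1) assms(3) by auto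
  also have "card \<dots> = (\<Sum>v\<in>V. outdeg F t v)" using assms(2,4) by (rule card_tails_in)
  also have "\<dots> = card V" using t(2) by simp
  finally show ?thesis .
qed

lemma is_kmap_imp_orientation:
  assumes "is_kmap k V F ep"
  shows "\<exists>t. orientation ep F t \<and> (\<forall>v\<in>V. outdeg F t v = k)"
proof -
  obtain c :: "_ \<Rightarrow> nat" where c: "\<forall>e\<in>F. c e < k" "\<forall>i<k. is_map V {e\<in>F. c e = i} ep"
    using assms unfolding is_kmap_def by blast
  hence "\<forall>i\<in>{..<k}. \<exists>T. orientation ep {e\<in>F. c e = i} T \<and>
      (\<forall>v\<in>V. outdeg {e\<in>F. c e = i} T v = 1)"
    unfolding is_map_def by blast
  from bchoice[OF this] obtain T where T: "\<forall>i<k. orientation ep {e\<in>F. c e = i} (T i) \<and>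
      (\<forall>v\<in>V. outdeg {e\<in>F. c e = i} (T i) v = 1)"
    by auto
  define t where "t e = T (c e) e" for e
  have "outdeg F t v = k" if "v \<in> V" for v
  proof -
    have fin: "finite {e\<in>{e\<in>F. c e = i}. T i e = v}" if "i < k" for i
      using T that \<open>v \<in> V\<close> by (intro card_ge_0_finite) simp
    have "{e\<in>F. t e = v} = (\<Union>i<k. {e\<in>{e\<in>F. c e = i}. T i e = v})"
      using c(1) by (auto simp: t_def)
    also have "card \<dots> = (\<Sum>i<k. outdeg {e\<in>F. c e = i} (T i) v)"
      using fin by (intro card_UN_disjoint) auto
    also have "\<dots> = k" using T \<open>v \<in> V\<close> by simp
    finally show ?thesis .
  qed
  moreover have "orientation ep F t" using T c(1) by (simp add: t_def)
  ultimately show ?thesis by blast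
qed

text \<open>Conversely, number the out-edges at each vertex by 0, ..., k - 1; each number class is a map.\<close>

lemma orientation_imp_is_kmap:
  assumes "finite F" "\<forall>e\<in>F. fst (ep e) \<in> V \<and> snd (ep e) \<in> V"
    and t: "orientation ep F t" and deg: "\<forall>v\<in>V. outdeg F t v = k"
  shows "is_kmap k V F ep"
proof -
  have "\<exists>b. bij_betw b {e\<in>F. t e = v} {..<k}" if "v \<in> V" for v
    using deg that \<open>finite F\<close> by (intro finite_same_card_bij) auto
  then obtain B where B: "\<forall>v\<in>V. bij_betw (B v) {e\<in>F. t e = v} {..<k}" by metis
  define c where "c e = B (t e) e" for e
  have tV: "\<forall>e\<in>F. t e \<in> V" using assms(2) t by auto
  have "is_map V {e\<in>F. c e = i} ep" if "i < k" for i
    unfolding is_map_def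
  proof (intro exI conjI ballI)
    fix v assume "v \<in> V"
    hence bij: "bij_betw (B v) {e\<in>F. t e = v} {..<k}" using B by blast
    hence "i \<in> B v ` {e\<in>F. t e = v}" using \<open>i < k\<close> by (simp add: bij_betw_def)
    then obtain e where e: "e \<in> F" "t e = v" "B v e = i" by blast
    have "{e\<in>{e\<in>F. c e = i}. t e = v} = {e}"
      using e bij unfolding c_def bij_betw_def inj_on_def by auto
    thus "outdeg {e\<in>F. c e = i} t v = 1" by simp
  qed (use t in auto)
  moreover have "\<forall>e\<in>F. c e < k" using B tV by (auto simp: c_def bij_betw_def)
  ultimately show ?thesis unfolding is_kmap_def by blast
qed

lemma is_map_image:
  assumes "is_map V F ep" "inj_on g F" "\<forall>e\<in>F. ep' (g e) = ep e"
  shows "is_map V (g ` F) ep'"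
proof -
  obtain t where t: "orientation ep F t" "\<forall>v\<in>V. outdeg F t v = 1"
    using assms(1) unfolding is_map_def by blast
  define t' where "t' x = t (the_inv_into F g x)" for x
  have inv: "the_inv_into F g (g e) = e" if "e \<in> F" for e
    using assms(2) that by (rule the_inv_into_f_f)
  have "{x\<in>g ` F. t' x = v} = g ` {e\<in>F. t e = v}" for v
    using inv by (force simp: t'_def)
  hence "outdeg (g ` F) t' v = outdeg F t v" for v
    using assms(2) by (simp add: card_image inj_on_subset)
  moreover have "orientation ep' (g ` F) t'" using t(1) inv assms(3) by (auto simp: t'_def)
  ultimately show ?thesis using t(2) unfolding is_map_def by auto
qed

section \<open>A spanning tree plus an edge is a map\<close>

text \<open>Every vertex v other than a is assigned the first edge of a shortest walk from v to a; its
  other endpoint is strictly closer to a, which makes the assignment injective.\<close>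

lemma connected_parent_edges:
  assumes conn: "connected_on V T ep" and "a \<in> V"
  shows "\<exists>p. inj_on p (V - {a}) \<and> (\<forall>v\<in>V - {a}. p v \<in> T \<and> (fst (ep (p v)) = v \<or> snd (ep (p v)) = v))"
proof -
  define dist where
    "dist v = (LEAST n. \<exists>vs es. walk T ep vs es \<and> hd vs = v \<and> last vs = a \<and> length es = n)" for v
  have dist_le: "dist v \<le> length es" if "walk T ep vs es" "hd vs = v" "last vs = a" for v vs es
    unfolding dist_def using that by (intro Least_le) blast
  have "\<exists>e w. e \<in> T \<and> (ep e = (v, w) \<or> ep e = (w, v)) \<and> dist w < dist v" if v: "v \<in> V - {a}" for v
  proof -
    have "\<exists>n vs es. walk T ep vs es \<and> hd vs = v \<and> last vs = a \<and> length es = n"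
      using conn v \<open>a \<in> V\<close> unfolding connected_on_def by blast
    hence "\<exists>vs es. walk T ep vs es \<and> hd vs = v \<and> last vs = a \<and> length es = dist v"
      unfolding dist_def by (rule LeastI_ex)
    then obtain vs es where w: "walk T ep vs es" "hd vs = v" "last vs = a" "length es = dist v"
      by blast
    show ?thesis
    proof (cases es)
      case Nil
      then obtain u where "vs = [u]" using w(1) by (auto simp: walk_def length_Suc_conv)
      thus ?thesis using w v by auto
    next
      case (Cons e es')
      obtain u vs' where vs: "vs = u # vs'" using w(1) by (cases vs) (auto simp: walk_def)
      have e: "e \<in> T" "ep e = (u, hd vs') \<or> ep e = (hd vs', u)" and "vs' \<noteq> []" "walk T ep vs' es'"
        using w(1) unfolding vs Cons by (auto simp: walk_Cons)
      hence "dist (hd vs') \<le> length es'" using w(3) vs dist_le by auto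
      also have "\<dots> < dist v" using w(4) Cons by simp
      finally show ?thesis using e w(2) vs by auto
    qed
  qed
  then obtain p where p: "\<forall>v\<in>V - {a}. \<exists>w. p v \<in> T \<and> (ep (p v) = (v, w) \<or> ep (p v) = (w, v)) \<and> dist w < dist v"
    by metis
  have "inj_on p (V - {a})"
  proof (rule inj_onI, rule ccontr)
    fix v v' assume "v \<in> V - {a}" "v' \<in> V - {a}" "p v = p v'" "v \<noteq> v'"
    moreover obtain w where "ep (p v) = (v, w) \<or> ep (p v) = (w, v)" "dist w < dist v"
      using p \<open>v \<in> V - {a}\<close> by blast
    moreover obtain w' where "ep (p v') = (v', w') \<or> ep (p v') = (w', v')" "dist w' < dist v'"
      using p \<open>v' \<in> V - {a}\<close> by blast
    ultimately show False by auto
  qed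
  moreover have "\<forall>v\<in>V - {a}. p v \<in> T \<and> (fst (ep (p v)) = v \<or> snd (ep (p v)) = v)"
    using p by force
  ultimately show ?thesis by blast
qed

lemma connected_card_edges:
  assumes "connected_on V T ep" "finite T" "a \<in> V"
  shows "card V - 1 \<le> card T"
proof -
  obtain p where "inj_on p (V - {a})" "p ` (V - {a}) \<subseteq> T"
    using connected_parent_edges[OF assms(1,3)] by blast
  hence "card (V - {a}) \<le> card T" using assms(2) by (metis card_image card_mono)
  thus ?thesis using assms(3) by (simp add: card_Diff_singleton_if)
qed

lemma is_map_insert_root:
  assumes "a \<in> V" and p: "bij_betw p (V - {a}) F"
    and incident: "\<forall>v\<in>V - {a}. fst (ep (p v)) = v \<or> snd (ep (p v)) = v"
    and "x \<notin> F" "fst (ep x) = a"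
  shows "is_map V (insert x F) ep"
proof -
  define t where "t e = (if e = x then a else inv_into (V - {a}) p e)" for e
  have inv: "inv_into (V - {a}) p e \<in> V - {a}" "p (inv_into (V - {a}) p e) = e" if "e \<in> F" for e
    using p that by (auto simp: bij_betw_def inv_into_into f_inv_into_f)
  have "orientation ep (insert x F) t"
  proof
    fix e assume e: "e \<in> insert x F"
    show "t e = fst (ep e) \<or> t e = snd (ep e)"
    proof (cases "e = x")
      case True thus ?thesis using assms(5) by (simp add: t_def)
    next
      case False
      hence "e \<in> F" "t e = inv_into (V - {a}) p e" using e by (auto simp: t_def)
      thus ?thesis using incident inv by metis
    qed
  qed
  moreover have "outdeg (insert x F) t v = 1" if "v \<in> V" for v
  proof -
    have "{e\<in>insert x F. t e = v} = (if v = a then {x} else {p v})"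
      using inv assms(4) p that unfolding t_def bij_betw_def
      by (auto simp: inv_into_f_f)
    thus ?thesis by simp
  qed
  ultimately show ?thesis unfolding is_map_def by blast
qed

section \<open>Trees and maps give a k-map after adding l edges\<close>

lemma card_partition_classes:
  fixes c :: "'e \<Rightarrow> nat"
  assumes "finite E" "\<forall>e\<in>E. c e < k"
  shows "card E = (\<Sum>i<k. card {e\<in>E. c e = i})"
proof -
  have "E = (\<Union>i<k. {e\<in>E. c e = i})" using assms(2) by auto
  also have "card \<dots> = (\<Sum>i<k. card {e\<in>E. c e = i})"
    using assms(1) by (intro card_UN_disjoint) auto
  finally show ?thesis .
qed

lemma tree_classes_card:
  assumes "l \<le> k" "multigraph V E ep" "int (card E) = int k * int (card V) - int l"
    and c: "\<forall>e\<in>E. c e < k" "\<forall>i<l. connected_on V {e\<in>E. c e = i} ep"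
      "\<forall>i. l \<le> i \<and> i < k \<longrightarrow> is_map V {e\<in>E. c e = i} ep"
    and "i < l"
  shows "card {e\<in>E. c e = i} = card V - 1"
proof -
  define n where "n = card V"
  have fin: "finite V" "finite E" and ends: "\<forall>e\<in>E. fst (ep e) \<in> V \<and> snd (ep e) \<in> V"
    using assms(2) unfolding multigraph_def by auto
  have "n \<noteq> 0"
  proof
    assume "n = 0"
    with assms(3) have "int (card E) = - int l" by (simp add: n_def)
    with \<open>i < l\<close> show False by simp
  qed
  then obtain a where "a \<in> V" using n_def by fastforce
  have maps: "card {e\<in>E. c e = j} = n" if "j \<in> {l..<k}" for j
    using c(3) that fin ends by (auto simp: n_def intro: is_map_card)
  have trees: "n - 1 \<le> card {e\<in>E. c e = j}" if "j \<in> {..<l}" for j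
    using connected_card_edges[of V "{e\<in>E. c e = j}" ep a] c(2) that fin \<open>a \<in> V\<close>
    by (simp add: n_def)
  define S where "S = (\<Sum>j<l. card {e\<in>E. c e = j})"
  have "card E = S + (\<Sum>j=l..<k. card {e\<in>E. c e = j})"
    using card_partition_classes[OF fin(2) c(1)] \<open>l \<le> k\<close>
    by (simp add: S_def sum.atLeastLessThan_concat lessThan_atLeast0)
  also have "(\<Sum>j=l..<k. card {e\<in>E. c e = j}) = (k - l) * n" using maps by simp
  finally have "int (card E) = int S + (int k - int l) * int n"
    using \<open>l \<le> k\<close> by (simp add: of_nat_diff)
  hence "int S = int l * (int n - 1)" using assms(3) by (simp add: n_def algebra_simps)
  hence "int S = int (l * (n - 1))" using \<open>n \<noteq> 0\<close> by (simp add: of_nat_diff)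
  hence "S = l * (n - 1)" by (simp only: of_nat_eq_iff)
  hence "(\<Sum>j<l. card {e\<in>E. c e = j}) = (\<Sum>j<l. n - 1)" by (simp add: S_def)
  from sum_mono_inv[OF this[symmetric] trees] \<open>i < l\<close> show ?thesis by (simp add: n_def)
qed

lemma trees_and_maps_add_edges_is_kmap:
  assumes "l \<le> k" "multigraph V E ep" "int (card E) = int k * int (card V) - int l"
    and "trees_and_maps l k V E ep" and f: "\<forall>i<l. fst (f i) \<in> V \<and> snd (f i) \<in> V"
  shows "is_kmap k V (add_edges E l) (case_sum ep f)"
proof -
  obtain c :: "_ \<Rightarrow> nat" where c: "\<forall>e\<in>E. c e < k" "\<forall>i<l. spanning_tree V {e\<in>E. c e = i} ep"
    "\<forall>i. l \<le> i \<and> i < k \<longrightarrow> is_map V {e\<in>E. c e = i} ep"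
    using assms(4) unfolding trees_and_maps_def by blast
  define C where "C i = {e\<in>E. c e = i}" for i
  have fin: "finite V" "finite E" using assms(2) unfolding multigraph_def by auto
  have tree_map: "is_map V (insert (Inr i) (Inl ` C i)) (case_sum ep f)" if "i < l" for i
  proof -
    have conn: "connected_on V (C i) ep" using c(2) that by (simp add: C_def spanning_tree_def)
    have a: "fst (f i) \<in> V" using f that by blast
    then obtain p where p: "inj_on p (V - {fst (f i)})"
      "\<forall>v\<in>V - {fst (f i)}. p v \<in> C i \<and> (fst (ep (p v)) = v \<or> snd (ep (p v)) = v)"
      using connected_parent_edges[OF conn] by blast
    have "card (p ` (V - {fst (f i)})) = card (C i)"
      using tree_classes_card[OF assms(1-3) c(1) _ c(3) that] c(2) p(1) a fin
      by (simp add: card_image C_def spanning_tree_def)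
    hence "p ` (V - {fst (f i)}) = C i"
      using p(2) fin(2) by (intro card_subset_eq) (auto simp: C_def)
    hence "bij_betw (Inl \<circ> p) (V - {fst (f i)}) (Inl ` C i)"
      using p(1) by (auto simp: bij_betw_def inj_on_def image_comp[symmetric])
    thus ?thesis using p(2) a by (intro is_map_insert_root) auto
  qed
  have "is_map V (Inl ` C i) (case_sum ep f)" if "l \<le> i" "i < k" for i
    using c(3) that by (intro is_map_image) (auto simp: C_def)
  moreover have "{x\<in>add_edges E l. case_sum c id x = i} =
      (if i < l then insert (Inr i) (Inl ` C i) else Inl ` C i)" for i
    by (auto simp: add_edges_def C_def)
  moreover have "\<forall>x\<in>add_edges E l. case_sum c id x < k" using c(1) assms(1) by (auto simp: add_edges_def)
  ultimately show ?thesis using tree_map unfolding is_kmap_def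
    by (intro exI[of _ "case_sum c id"]) (auto simp: not_less)
qed

section \<open>A graph that becomes a k-map after adding any l edges\<close>

lemma add_loops_orientation:
  fixes E :: "'e set"
  assumes "finite E" "is_kmap k V (add_edges E l) (case_sum ep (\<lambda>i. (x, x)))"
  shows "\<exists>t. orientation ep E t \<and> (\<forall>v\<in>V. outdeg E t v + (if v = x then l else 0) = k)"
proof -
  obtain t' where t': "orientation (case_sum ep (\<lambda>i. (x, x))) (add_edges E l) t'"
    "\<forall>v\<in>V. outdeg (add_edges E l) t' v = k"
    using is_kmap_imp_orientation[OF assms(2)] by blast
  define t where "t e = t' (Inl e)" for e
  have loops: "t' (Inr i) = x" if "i < l" for i
  proof -
    have "Inr i \<in> add_edges E l" using that by (simp add: add_edges_def)
    with t'(1) show ?thesis by auto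
  qed
  have "outdeg (add_edges E l) t' v = outdeg E t v + (if v = x then l else 0)" for v
  proof -
    have "{y\<in>add_edges E l. t' y = v} = Inl ` {e\<in>E. t e = v} \<union> Inr ` (if v = x then {..<l} else {})"
      using loops by (auto simp: add_edges_def t_def)
    hence "outdeg (add_edges E l) t' v =
        card (Inl ` {e\<in>E. t e = v} :: ('e + nat) set) + card (Inr ` (if v = x then {..<l} else {}) :: ('e + nat) set)"
      using assms(1) by (subst card_Un_disjoint[symmetric]) auto
    thus ?thesis by (simp add: card_image)
  qed
  moreover have "orientation ep E t"
  proof
    fix e assume "e \<in> E"
    hence "Inl e \<in> add_edges E l" by (simp add: add_edges_def)
    with t'(1) show "t e = fst (ep e) \<or> t e = snd (ep e)" by (auto simp: t_def)
  qed
  ultimately show ?thesis using t'(2) by (auto intro!: exI[of _ t])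
qed

lemma induced_edges_bound:
  assumes "finite E" "finite X" "X \<subseteq> V" "x \<in> X"
    and t: "orientation ep E t" "\<forall>v\<in>V. outdeg E t v + (if v = x then l else 0) = k"
  shows "card {e\<in>E. fst (ep e) \<in> X \<and> snd (ep e) \<in> X} + l \<le> k * card X"
proof -
  have "card {e\<in>E. t e \<in> X} + l = (\<Sum>v\<in>X. outdeg E t v + (if v = x then l else 0))"
    using card_tails_in[OF assms(1,2)] assms(2,4) by (simp add: sum.distrib)
  also have "\<dots> = (\<Sum>v\<in>X. k)" using t(2) assms(3) by (intro sum.cong) auto
  also have "\<dots> = k * card X" by simp
  finally have "card {e\<in>E. t e \<in> X} + l = k * card X" .
  moreover have "card {e\<in>E. fst (ep e) \<in> X \<and> snd (ep e) \<in> X} \<le> card {e\<in>E. t e \<in> X}"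
    using t(1) assms(1) by (intro card_mono) auto
  ultimately show ?thesis by linarith
qed

lemma cut_condition_from_orientation:
  assumes "finite E" "finite V"
    and t: "orientation ep E t" "\<forall>v\<in>V. outdeg E t v + (if v = r then l else 0) = k"
    and sparse: "\<And>X. X \<subseteq> V \<Longrightarrow> X \<noteq> {} \<Longrightarrow>
      card {e\<in>E. fst (ep e) \<in> X \<and> snd (ep e) \<in> X} + l \<le> k * card X"
  shows "cut_condition V r t (head_of ep t) E l"
  unfolding cut_condition_def
proof (intro allI impI)
  fix X assume X: "X \<subseteq> V - {r}" "X \<noteq> {}"
  hence "finite X" using assms(2) by (meson finite_Diff finite_subset)
  have "card {e\<in>E. t e \<in> X} = (\<Sum>v\<in>X. outdeg E t v)"
    using assms(1) \<open>finite X\<close> by (rule card_tails_in)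
  also have "\<dots> = (\<Sum>v\<in>X. k)"
  proof (rule sum.cong)
    fix v assume "v \<in> X"
    hence "v \<in> V" "v \<noteq> r" using X(1) by auto
    thus "outdeg E t v = k" using t(2) by force
  qed simp
  also have "{e\<in>E. t e \<in> X} =
      {e\<in>E. t e \<in> X \<and> head_of ep t e \<in> X} \<union> {e\<in>E. t e \<in> X \<and> head_of ep t e \<notin> X}" by auto
  finally have "k * card X = card {e\<in>E. t e \<in> X \<and> head_of ep t e \<in> X} + out_cut E t (head_of ep t) X"
    using assms(1) by (simp add: card_Un_disjoint out_cut_def disjoint_iff)
  moreover have "{e\<in>E. t e \<in> X \<and> head_of ep t e \<in> X} \<subseteq> {e\<in>E. fst (ep e) \<in> X \<and> snd (ep e) \<in> X}"
  proof
    fix e assume e: "e \<in> {e\<in>E. t e \<in> X \<and> head_of ep t e \<in> X}"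
    hence "ep e = (t e, head_of ep t e) \<or> ep e = (head_of ep t e, t e)"
      using t(1) by (intro endpoints_tail_head) auto
    thus "e \<in> {e\<in>E. fst (ep e) \<in> X \<and> snd (ep e) \<in> X}" using e by auto
  qed
  hence "card {e\<in>E. t e \<in> X \<and> head_of ep t e \<in> X} \<le> card {e\<in>E. fst (ep e) \<in> X \<and> snd (ep e) \<in> X}"
    using assms(1) by (intro card_mono) auto
  ultimately show "l \<le> out_cut E t (head_of ep t) X" using sparse[of X] X by force
qed

lemma outdeg_split_classes:
  fixes c :: "'e \<Rightarrow> nat"
  assumes "finite E"
  shows "outdeg E t v = outdeg {e\<in>E. \<not> c e < l} t v + (\<Sum>i<l. outdeg {e\<in>E. c e = i} t v)"
proof -
  have "{e\<in>E. t e = v} = {e\<in>{e\<in>E. \<not> c e < l}. t e = v} \<union> (\<Union>i<l. {e\<in>{e\<in>E. c e = i}. t e = v})"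
    by auto
  also have "card \<dots> = outdeg {e\<in>E. \<not> c e < l} t v + card (\<Union>i<l. {e\<in>{e\<in>E. c e = i}. t e = v})"
    using assms by (intro card_Un_disjoint) auto
  also have "card (\<Union>i<l. {e\<in>{e\<in>E. c e = i}. t e = v}) = (\<Sum>i<l. outdeg {e\<in>E. c e = i} t v)"
    using assms by (intro card_UN_disjoint) auto
  finally show ?thesis .
qed

lemma add_edges_is_kmap_imp_rooted_orientation:
  fixes V :: "'v set" and E :: "'e set" and ep :: "'e \<Rightarrow> 'v \<times> 'v"
  assumes "multigraph V E ep" "r \<in> V"
    and kmap: "\<forall>f :: nat \<Rightarrow> 'v \<times> 'v. (\<forall>i<l. fst (f i) \<in> V \<and> snd (f i) \<in> V) \<longrightarrow>
        is_kmap k V (add_edges E l) (case_sum ep f)"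
  shows "\<exists>t. orientation ep E t \<and> (\<forall>v\<in>V. outdeg E t v + (if v = r then l else 0) = k) \<and>
    cut_condition V r t (head_of ep t) E l"
proof -
  have fin: "finite V" "finite E" using assms(1) unfolding multigraph_def by auto
  have loops: "\<exists>t. orientation ep E t \<and> (\<forall>v\<in>V. outdeg E t v + (if v = x then l else 0) = k)"
    if "x \<in> V" for x
    using kmap that by (intro add_loops_orientation fin(2)) auto
  obtain t where t: "orientation ep E t" "\<forall>v\<in>V. outdeg E t v + (if v = r then l else 0) = k"
    using loops[OF \<open>r \<in> V\<close>] by blast
  have "card {e\<in>E. fst (ep e) \<in> X \<and> snd (ep e) \<in> X} + l \<le> k * card X"
    if "X \<subseteq> V" "X \<noteq> {}" for X
  proof -
    obtain x where "x \<in> X" using \<open>X \<noteq> {}\<close> by blast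
    then obtain tx where "orientation ep E tx" "\<forall>v\<in>V. outdeg E tx v + (if v = x then l else 0) = k"
      using loops \<open>X \<subseteq> V\<close> by blast
    with induced_edges_bound[OF fin(2) finite_subset[OF \<open>X \<subseteq> V\<close> fin(1)] \<open>X \<subseteq> V\<close> \<open>x \<in> X\<close>]
    show ?thesis by blast
  qed
  hence "cut_condition V r t (head_of ep t) E l"
    using cut_condition_from_orientation[OF fin(2,1) t] by blast
  with t show ?thesis by blast
qed

text \<open>The arborescence arcs use up one unit of out-degree at every vertex but r, leaving
  out-degree k - l everywhere.\<close>

lemma rooted_orientation_imp_trees_and_maps:
  fixes E :: "'e set"
  assumes "l \<le> k" "multigraph V E ep" "r \<in> V"
    and t: "orientation ep E t" "\<forall>v\<in>V. outdeg E t v + (if v = r then l else 0) = k"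
    and cut: "cut_condition V r t (head_of ep t) E l"
  shows "trees_and_maps l k V E ep"
proof -
  have fin: "finite V" "finite E" and ends: "\<forall>e\<in>E. fst (ep e) \<in> V \<and> snd (ep e) \<in> V"
    using assms(2) unfolding multigraph_def by auto
  have "\<forall>e\<in>E. t e \<in> V \<and> head_of ep t e \<in> V"
    using t(1) ends by (auto simp: head_of_def)
  then obtain c :: "'e \<Rightarrow> nat" where c: "\<forall>i<l. in_arborescence V r t (head_of ep t) {e\<in>E. c e = i}"
    using arborescence_packing[OF fin(1) \<open>r \<in> V\<close> fin(2) _ cut] by blast
  define S where "S = {e\<in>E. \<not> c e < l}"
  have "outdeg S t v = k - l" if "v \<in> V" for v
  proof -
    have "(\<Sum>i<l. outdeg {e\<in>E. c e = i} t v) = (\<Sum>i<l. if v = r then 0 else 1)"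
      using in_arborescence_outdeg[OF c[rule_format] that] by (intro sum.cong) auto
    hence "(\<Sum>i<l. outdeg {e\<in>E. c e = i} t v) = (if v = r then 0 else l)" by simp
    hence "outdeg E t v = outdeg S t v + (if v = r then 0 else l)"
      using outdeg_split_classes[OF fin(2), of t v c l] by (simp add: S_def)
    moreover have "outdeg E t v + (if v = r then l else 0) = k" using t(2) that by blast
    ultimately show ?thesis by (cases "v = r") simp_all
  qed
  then obtain g where g: "\<forall>e\<in>S. g e < k - l" "\<forall>j<k - l. is_map V {e\<in>S. g e = j} ep"
    using orientation_imp_is_kmap[of S ep V t "k - l"] fin(2) ends t(1)
    unfolding is_kmap_def S_def by auto
  define c' where "c' e = (if c e < l then c e else l + g e)" for e
  have "{e\<in>E. c' e = i} = {e\<in>E. c e = i}" if "i < l" for i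
    using that by (auto simp: c'_def)
  moreover have "{e\<in>E. c' e = i} = {e\<in>S. g e = i - l}" if "l \<le> i" for i
    using that by (auto simp: c'_def S_def)
  moreover have "\<forall>e\<in>E. c' e < k" using g(1) \<open>l \<le> k\<close> by (auto simp: c'_def S_def)
  moreover have "spanning_tree V {e\<in>E. c e = i} ep" if "i < l" for i
    using c that t(1) by (intro in_arborescence_spanning_tree[OF _ _ \<open>r \<in> V\<close>]) auto
  moreover have "is_map V {e\<in>S. g e = i - l} ep" if "l \<le> i" "i < k" for i
    using g(2) that by (simp add: less_diff_conv2)
  ultimately show ?thesis unfolding trees_and_maps_def by (intro exI[of _ c']) auto
qed

lemma add_edges_is_kmap_imp_trees_and_maps:
  fixes V :: "'v set" and E :: "'e set" and ep :: "'e \<Rightarrow> 'v \<times> 'v"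
  assumes "l \<le> k" "multigraph V E ep"
    and "\<forall>f :: nat \<Rightarrow> 'v \<times> 'v. (\<forall>i<l. fst (f i) \<in> V \<and> snd (f i) \<in> V) \<longrightarrow>
        is_kmap k V (add_edges E l) (case_sum ep f)"
  shows "trees_and_maps l k V E ep"
proof (cases "V = {}")
  case True
  hence "E = {}" using assms(2) unfolding multigraph_def by auto
  thus ?thesis using True
    by (auto simp: trees_and_maps_def spanning_tree_def connected_on_def acyclic_edges_def
        walk_def is_map_def)
next
  case False
  then obtain r where "r \<in> V" by blast
  with add_edges_is_kmap_imp_rooted_orientation[OF assms(2) this assms(3)]
  show ?thesis using rooted_orientation_imp_trees_and_maps[OF assms(1,2)] by blast
qed

theorem corollary1:
  fixes V :: "'v set" and E :: "'e set" and ep :: "'e \<Rightarrow> 'v \<times> 'v" and k l :: nat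
  assumes "k \<ge> 1" and "l \<le> k"
    and "multigraph V E ep"
    and "int (card E) = int k * int (card V) - int l"
  shows "trees_and_maps l k V E ep \<longleftrightarrow>
    (\<forall>f :: nat \<Rightarrow> 'v \<times> 'v. (\<forall>i<l. fst (f i) \<in> V \<and> snd (f i) \<in> V) \<longrightarrow>
        is_kmap k V (add_edges E l) (case_sum ep f))"
  using trees_and_maps_add_edges_is_kmap[OF assms(2-4)]
    add_edges_is_kmap_imp_trees_and_maps[OF assms(2,3)] by blast

end
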